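(* Let $\varphi:\mathbb N\to(0,\infty)$ be nonincreasing with $\lim_{n\to\infty}\varphi(n)=0$ and $\lim_{n\to\infty}n\varphi(n)=\infty$. Then there exists a nondecreasing function $\xi:\mathbb N\to\mathbb N$ with $\lim_{n\to\infty}\xi(n)=\infty$ such that for all sufficiently large $n$, $\varphi(1)\le\xi(n)\,\varphi(n\xi(n))\le2\varphi(1)$. *)

theory Defs
  imports Complex_Main
begin

end

theory Submission
  imports Defs
begin

text \<open>Take \<open>\<xi> n\<close> to be the least \<open>k \<ge> 1\<close> with \<open>\<phi> 1 \<le> k \<phi>(nk)\<close>; it exists because
  \<open>m \<phi>(m) \<rightarrow> \<infinity>\<close>. Minimality gives the upper bound: \<open>\<xi> \<phi>(n\<xi>) \<le> 2 (\<xi> - 1) \<phi>(n(\<xi> - 1)) < 2 \<phi>(1)\<close>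
  when \<open>\<xi> \<ge> 2\<close>. Monotonicity of \<open>\<phi>\<close> makes every scale admissible for \<open>n\<close> admissible for
  all smaller \<open>m\<close>, so \<open>\<xi>\<close> is nondecreasing; and \<open>\<xi>\<close> is unbounded since a bounded \<open>\<xi>\<close> would give
  \<open>\<phi> 1 \<le> \<xi> \<phi>(n) \<rightarrow> 0\<close>.\<close>

definition least_scale :: "(nat \<Rightarrow> real) \<Rightarrow> real \<Rightarrow> nat \<Rightarrow> nat" where
  "least_scale \<phi> c n = (LEAST k. k \<ge> 1 \<and> c \<le> real k * \<phi> (n * k))"

lemma scale_exists:
  fixes \<phi> :: "nat \<Rightarrow> real"
  assumes "filterlim (\<lambda>m. real m * \<phi> m) at_top sequentially" and "n \<ge> 1"
  shows "\<exists>k. k \<ge> 1 \<and> c \<le> real k * \<phi> (n * k)"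
proof -
  have "\<forall>\<^sub>F m in sequentially. c * real n \<le> real m * \<phi> m"
    using assms(1) by (simp add: filterlim_at_top)
  then obtain N where N: "\<And>m. m \<ge> N \<Longrightarrow> c * real n \<le> real m * \<phi> m"
    by (auto simp: eventually_sequentially)
  have "N \<le> n * (N + 1)"
    using assms(2) by (cases n) auto
  from N[OF this] have "real n * c \<le> real n * (real (N + 1) * \<phi> (n * (N + 1)))"
    by (simp add: algebra_simps)
  then have "c \<le> real (N + 1) * \<phi> (n * (N + 1))"
    using assms(2) by simp
  then show ?thesis by (intro exI[of _ "N + 1"]) simp
qed

lemma least_scale_le:
  assumes "k \<ge> 1" and "c \<le> real k * \<phi> (n * k)"
  shows "least_scale \<phi> c n \<le> k"
  unfolding least_scale_def by (rule Least_le) (use assms in simp)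

lemma least_scale_admissible:
  fixes \<phi> :: "nat \<Rightarrow> real"
  assumes "filterlim (\<lambda>m. real m * \<phi> m) at_top sequentially" and "n \<ge> 1"
  shows "least_scale \<phi> c n \<ge> 1"
    and "c \<le> real (least_scale \<phi> c n) * \<phi> (n * least_scale \<phi> c n)"
  using LeastI_ex[OF scale_exists[OF assms, of c]] by (simp_all add: least_scale_def)

lemma least_scale_predecessor:
  assumes "least_scale \<phi> c n \<ge> 2"
  shows "real (least_scale \<phi> c n - 1) * \<phi> (n * (least_scale \<phi> c n - 1)) < c"
proof -
  have "\<not> (least_scale \<phi> c n - 1 \<ge> 1 \<and> c \<le> real (least_scale \<phi> c n - 1) * \<phi> (n * (least_scale \<phi> c n - 1)))"
    unfolding least_scale_def by (rule not_less_Least) (use assms in \<open>simp add: least_scale_def\<close>)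
  with assms show ?thesis by auto
qed

lemma mono_least_scale:
  fixes \<phi> :: "nat \<Rightarrow> real"
  assumes noninc: "\<And>m n. 1 \<le> m \<Longrightarrow> m \<le> n \<Longrightarrow> \<phi> n \<le> \<phi> m"
    and lim: "filterlim (\<lambda>m. real m * \<phi> m) at_top sequentially"
    and "1 \<le> m" "m \<le> n"
  shows "least_scale \<phi> c m \<le> least_scale \<phi> c n"
proof -
  let ?k = "least_scale \<phi> c n"
  have k: "?k \<ge> 1" "c \<le> real ?k * \<phi> (n * ?k)"
    using least_scale_admissible[OF lim] assms(3,4) by auto
  have "\<phi> (n * ?k) \<le> \<phi> (m * ?k)"
    using assms(3,4) k(1) by (intro noninc) auto
  then have "real ?k * \<phi> (n * ?k) \<le> real ?k * \<phi> (m * ?k)"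
    by (simp add: mult_left_mono)
  with k(2) have "c \<le> real ?k * \<phi> (m * ?k)"
    by linarith
  with k(1) show ?thesis
    by (rule least_scale_le)
qed

lemma filterlim_least_scale_at_top:
  fixes \<phi> :: "nat \<Rightarrow> real"
  assumes pos: "\<And>n. n \<ge> 1 \<Longrightarrow> \<phi> n > 0"
    and noninc: "\<And>m n. 1 \<le> m \<Longrightarrow> m \<le> n \<Longrightarrow> \<phi> n \<le> \<phi> m"
    and lim0: "\<phi> \<longlonglongrightarrow> 0"
    and lim: "filterlim (\<lambda>m. real m * \<phi> m) at_top sequentially"
    and "c > 0"
  shows "filterlim (least_scale \<phi> c) at_top sequentially"
  unfolding filterlim_at_top
proof
  fix Z :: nat
  have "\<forall>\<^sub>F n in sequentially. \<phi> n < c / real (Z + 1)"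
    using \<open>c > 0\<close> by (intro order_tendstoD(2)[OF lim0]) simp
  then obtain N where N: "\<And>n. n \<ge> N \<Longrightarrow> \<phi> n < c / real (Z + 1)"
    by (auto simp: eventually_sequentially)
  have "Z \<le> least_scale \<phi> c n" if n: "n \<ge> max N 1" for n
  proof (rule ccontr)
    let ?k = "least_scale \<phi> c n"
    assume "\<not> Z \<le> ?k"
    have k: "?k \<ge> 1" "c \<le> real ?k * \<phi> (n * ?k)"
      using least_scale_admissible[OF lim] n by auto
    have "real ?k * \<phi> (n * ?k) \<le> real Z * \<phi> n"
      using \<open>\<not> Z \<le> ?k\<close> k(1) n noninc[of n "n * ?k"] pos[of "n * ?k"]
      by (intro mult_mono) auto
    also have "\<dots> \<le> real Z * (c / real (Z + 1))"
      using N[of n] n by (intro mult_left_mono) auto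
    also have "\<dots> < c"
      using \<open>c > 0\<close> by (simp add: field_simps)
    finally show False
      using k(2) by simp
  qed
  then show "\<forall>\<^sub>F n in sequentially. Z \<le> least_scale \<phi> c n"
    unfolding eventually_sequentially by blast
qed

lemma least_scale_upper_bound:
  fixes \<phi> :: "nat \<Rightarrow> real"
  assumes pos: "\<And>n. n \<ge> 1 \<Longrightarrow> \<phi> n > 0"
    and noninc: "\<And>m n. 1 \<le> m \<Longrightarrow> m \<le> n \<Longrightarrow> \<phi> n \<le> \<phi> m"
    and lim: "filterlim (\<lambda>m. real m * \<phi> m) at_top sequentially"
    and "n \<ge> 1"
  shows "real (least_scale \<phi> (\<phi> 1) n) * \<phi> (n * least_scale \<phi> (\<phi> 1) n) \<le> 2 * \<phi> 1"
proof -
  let ?k = "least_scale \<phi> (\<phi> 1) n"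
  have "?k \<ge> 1"
    using least_scale_admissible[OF lim \<open>n \<ge> 1\<close>] by simp
  then consider "?k = 1" | "?k \<ge> 2" by linarith
  then show ?thesis
  proof cases
    case 1
    then show ?thesis
      using noninc[of 1 n] pos[of 1] \<open>n \<ge> 1\<close> by simp
  next
    case 2
    have "real ?k * \<phi> (n * ?k) \<le> (2 * real (?k - 1)) * \<phi> (n * (?k - 1))"
      using 2 \<open>n \<ge> 1\<close> noninc[of "n * (?k - 1)" "n * ?k"] pos[of "n * ?k"]
      by (intro mult_mono) auto
    also have "\<dots> < 2 * \<phi> 1"
      using least_scale_predecessor[OF 2] by simp
    finally show ?thesis by simp
  qed
qed

theorem lemma4p2:
  fixes \<phi> :: "nat \<Rightarrow> real"
  assumes pos: "\<And>n. n \<ge> 1 \<Longrightarrow> \<phi> n > 0"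
    and noninc: "\<And>m n. 1 \<le> m \<Longrightarrow> m \<le> n \<Longrightarrow> \<phi> n \<le> \<phi> m"
    and lim0: "\<phi> \<longlonglongrightarrow> 0"
    and liminf: "filterlim (\<lambda>n. real n * \<phi> n) at_top sequentially"
  shows "\<exists>\<xi> :: nat \<Rightarrow> nat.
           (\<forall>n. n \<ge> 1 \<longrightarrow> \<xi> n \<ge> 1)
         \<and> (\<forall>m n. 1 \<le> m \<longrightarrow> m \<le> n \<longrightarrow> \<xi> m \<le> \<xi> n)
         \<and> filterlim \<xi> at_top sequentially
         \<and> (\<forall>\<^sub>F n in sequentially.
               \<phi> 1 \<le> real (\<xi> n) * \<phi> (n * \<xi> n) \<and>
               real (\<xi> n) * \<phi> (n * \<xi> n) \<le> 2 * \<phi> 1)"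
proof (intro exI[of _ "least_scale \<phi> (\<phi> 1)"] conjI allI impI)
  show "least_scale \<phi> (\<phi> 1) n \<ge> 1" if "n \<ge> 1" for n
    using least_scale_admissible(1)[OF liminf that] .
  show "least_scale \<phi> (\<phi> 1) m \<le> least_scale \<phi> (\<phi> 1) n" if "1 \<le> m" "m \<le> n" for m n
    using mono_least_scale[OF noninc liminf that] .
  show "filterlim (least_scale \<phi> (\<phi> 1)) at_top sequentially"
    using filterlim_least_scale_at_top[OF pos noninc lim0 liminf] pos[of 1] by simp
  have "\<forall>\<^sub>F n in sequentially. n \<ge> 1"
    by (rule eventually_ge_at_top)
  then show "\<forall>\<^sub>F n in sequentially.
      \<phi> 1 \<le> real (least_scale \<phi> (\<phi> 1) n) * \<phi> (n * least_scale \<phi> (\<phi> 1) n) \<and>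
      real (least_scale \<phi> (\<phi> 1) n) * \<phi> (n * least_scale \<phi> (\<phi> 1) n) \<le> 2 * \<phi> 1"
    by eventually_elim
      (use least_scale_admissible(2)[OF liminf] least_scale_upper_bound[OF pos noninc liminf] in auto)
qed

end
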